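(* Let $G$ be a connected graph on at least $3$ vertices and let $G'$ be obtained from $G$ by splitting a vertex $v$. Then $rx_3(G')\le rx_3(G)+1$.
   Context: To split a vertex $v$ of $G$ means: replace $v$ by two new adjacent vertices $v_1,v_2$, and replace each edge $vu$ of $G$ by exactly one of the edges $v_1u$ or $v_2u$ (the other endpoint $u$ unchanged); all other edges are kept. An edge coloring may give adjacent edges the same color; a tree is rainbow if its edges have pairwise distinct colors. For a connected graph on at least $3$ vertices, $rx_3$ is the minimum number of colors in an edge coloring such that every set of $3$ vertices lies in some rainbow tree. *)

theory Defs
  imports Main
begin

definition simple_graph :: "'a set \<Rightarrow> 'a set set \<Rightarrow> bool" where
  "simple_graph V E \<longleftrightarrow> finite V \<and> (\<forall>e\<in>E. e \<subseteq> V \<and> card e = 2)"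

definition adj :: "'a set set \<Rightarrow> 'a \<Rightarrow> 'a \<Rightarrow> bool" where
  "adj E x y \<longleftrightarrow> {x, y} \<in> E"

definition graph_connected :: "'a set \<Rightarrow> 'a set set \<Rightarrow> bool" where
  "graph_connected V E \<longleftrightarrow> (\<forall>x\<in>V. \<forall>y\<in>V. (adj E)\<^sup>*\<^sup>* x y)"

definition has_cycle :: "'a set set \<Rightarrow> bool" where
  "has_cycle E \<longleftrightarrow> (\<exists>xs. length xs \<ge> 3 \<and> distinct xs \<and>
      (\<forall>i<length xs. {xs ! i, xs ! ((i + 1) mod length xs)} \<in> E))"

definition is_tree :: "'a set \<Rightarrow> 'a set set \<Rightarrow> bool" where
  "is_tree W F \<longleftrightarrow> W \<noteq> {} \<and> (\<forall>e\<in>F. e \<subseteq> W \<and> card e = 2) \<and>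
      graph_connected W F \<and> \<not> has_cycle F"

definition rainbow_3_connecting :: "'a set \<Rightarrow> 'a set set \<Rightarrow> ('a set \<Rightarrow> nat) \<Rightarrow> bool" where
  "rainbow_3_connecting V E c \<longleftrightarrow>
     (\<forall>S. S \<subseteq> V \<and> card S = 3 \<longrightarrow>
        (\<exists>W F. W \<subseteq> V \<and> F \<subseteq> E \<and> is_tree W F \<and> S \<subseteq> W \<and> inj_on c F))"

definition rx3 :: "'a set \<Rightarrow> 'a set set \<Rightarrow> nat" where
  "rx3 V E = (LEAST k. \<exists>c. (\<forall>e\<in>E. c e < k) \<and> rainbow_3_connecting V E c)"

(* (V', E') is obtained from (V, E) by splitting vertex v into new adjacent vertices
   v1, v2; each edge vu is replaced by exactly one of v1u, v2u (choice function f). *)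
definition is_split :: "'a set \<Rightarrow> 'a set set \<Rightarrow> 'a \<Rightarrow> 'a set \<Rightarrow> 'a set set \<Rightarrow> bool" where
  "is_split V E v V' E' \<longleftrightarrow> v \<in> V \<and>
     (\<exists>v1 v2 f. v1 \<noteq> v2 \<and> v1 \<notin> V - {v} \<and> v2 \<notin> V - {v} \<and>
        (\<forall>u. f u = v1 \<or> f u = v2) \<and>
        V' = (V - {v}) \<union> {v1, v2} \<and>
        E' = {e \<in> E. v \<notin> e} \<union> {{f u, u} | u. {v, u} \<in> E} \<union> {{v1, v2}})"

end

theory Submission
  imports Defs
begin

text \<open>Colour the split graph by giving the new edge \<open>v\<^sub>1v\<^sub>2\<close> a fresh colour and every other
edge the colour of its image under the map that contracts \<open>v\<^sub>1v\<^sub>2\<close> back to \<open>v\<close>.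
Given three vertices of the split graph, their images (padded to three vertices) lie in a rainbow
tree of the original graph. If that tree avoids \<open>v\<close> it survives the split unchanged;
otherwise splitting \<open>v\<close> inside the tree yields a connected subgraph containing the three
vertices on which the colouring is still injective, and any spanning tree of it is rainbow.\<close>

lemma adj_sym: "adj F x y \<Longrightarrow> adj F y x"
  unfolding adj_def by (simp add: insert_commute)

lemma adj_rtranclp_sym: "(adj F)\<^sup>*\<^sup>* x y \<Longrightarrow> (adj F)\<^sup>*\<^sup>* y x"
  by (metis adj_sym sympD sympI symp_rtranclp)

lemma cycle_edges_distinct:
  assumes "3 \<le> length xs" "distinct xs" "0 < i" "i < length xs"
  shows "{xs ! i, xs ! ((i + 1) mod length xs)} \<noteq> {xs ! 0, xs ! 1}"
proof
  assume eq: "{xs ! i, xs ! ((i + 1) mod length xs)} = {xs ! 0, xs ! 1}"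
  have idx: "xs ! j = xs ! k \<longleftrightarrow> j = k" if "j < length xs" "k < length xs" for j k
    using nth_eq_iff_index_eq[OF assms(2) that] .
  have small: "0 < length xs" "1 < length xs" "2 < length xs" using assms(1) by auto
  from eq have "xs ! i = xs ! 0 \<or> xs ! i = xs ! 1" by blast
  then have "i = 1" using assms(3) idx[OF assms(4) small(1)] idx[OF assms(4) small(2)] by blast
  with eq have "xs ! ((1 + 1) mod length xs) \<in> {xs ! 0, xs ! 1}" by blast
  moreover have "(1 + 1) mod length xs = 2" using assms(1) by simp
  ultimately have "xs ! 2 = xs ! 0 \<or> xs ! 2 = xs ! 1" by simp
  then show False using idx[OF small(3) small(1)] idx[OF small(3) small(2)] by simp
qed

lemma cycle_edge_bypass:
  assumes len: "3 \<le> length xs" and dis: "distinct xs"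
    and cyc: "\<forall>i<length xs. {xs ! i, xs ! ((i + 1) mod length xs)} \<in> F"
  shows "(adj (F - {{xs ! 0, xs ! 1}}))\<^sup>*\<^sup>* (xs ! 1) (xs ! 0)"
proof -
  let ?n = "length xs" and ?R = "(adj (F - {{xs ! 0, xs ! 1}}))\<^sup>*\<^sup>*"
  have "?R (xs ! 1) (xs ! (j mod ?n))" if "1 \<le> j" "j \<le> ?n" for j
    using that
  proof (induction j rule: nat_induct_at_least)
    case base
    then show ?case using len by simp
  next
    case (Suc j)
    then have "adj (F - {{xs ! 0, xs ! 1}}) (xs ! j) (xs ! (Suc j mod ?n))"
      using cyc cycle_edges_distinct[OF len dis, of j] unfolding adj_def by simp
    then show ?case using Suc by simp
  qed
  from this[of ?n] show ?thesis using len by simp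
qed

lemma connected_Diff_cycle_edge:
  assumes "graph_connected W F" "has_cycle F"
  obtains e where "e \<in> F" "graph_connected W (F - {e})"
proof -
  obtain xs where len: "3 \<le> length xs" and dis: "distinct xs"
    and cyc: "\<forall>i<length xs. {xs ! i, xs ! ((i + 1) mod length xs)} \<in> F"
    using assms(2) unfolding has_cycle_def by blast
  let ?e = "{xs ! 0, xs ! 1}" and ?R = "(adj (F - {{xs ! 0, xs ! 1}}))\<^sup>*\<^sup>*"
  have e_in: "?e \<in> F" using cyc[rule_format, of 0] len by force
  have bypass: "?R (xs ! 1) (xs ! 0)" using cycle_edge_bypass[OF len dis cyc] .
  have edge: "?R x y" if "adj F x y" for x y
  proof (cases "{x, y} = ?e")
    case True
    then show ?thesis using bypass adj_rtranclp_sym by (auto simp: doubleton_eq_iff)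
  next
    case False
    with that have "adj (F - {?e}) x y" by (simp add: adj_def)
    then show ?thesis by simp
  qed
  have "?R x y" if "(adj F)\<^sup>*\<^sup>* x y" for x y
    using that by (induction rule: rtranclp_induct) (simp, meson edge rtranclp_trans)
  then have "graph_connected W (F - {?e})"
    using assms(1) unfolding graph_connected_def by blast
  with e_in show thesis by (rule that)
qed

lemma connected_imp_spanning_tree:
  assumes "finite W" "W \<noteq> {}" "\<forall>e\<in>F. e \<subseteq> W \<and> card e = 2" "graph_connected W F"
  obtains T where "T \<subseteq> F" "is_tree W T"
proof -
  have "finite F"
    using assms(1,3) by (intro finite_subset[of F "Pow W"]) auto
  obtain T where T: "T \<subseteq> F" "graph_connected W T"
    and min: "\<And>T'. T' \<subseteq> F \<Longrightarrow> graph_connected W T' \<Longrightarrow> card T \<le> card T'"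
    using ex_has_least_nat[of "\<lambda>T. T \<subseteq> F \<and> graph_connected W T" F card] assms(4) by auto
  have "\<not> has_cycle T"
  proof
    assume "has_cycle T"
    then obtain e where e: "e \<in> T" "graph_connected W (T - {e})"
      using connected_Diff_cycle_edge T(2) by blast
    have "card (T - {e}) < card T"
      using e(1) \<open>finite F\<close> T(1) by (meson card_Diff1_less finite_subset)
    moreover have "card T \<le> card (T - {e})" using min T(1) e(2) by blast
    ultimately show False by simp
  qed
  then have "is_tree W T" using T assms unfolding is_tree_def by blast
  with T(1) show thesis by (rule that)
qed

lemma rainbow_3_connecting_if_inj:
  assumes "simple_graph V E" "graph_connected V E" "V \<noteq> {}" "inj_on c E"
  shows "rainbow_3_connecting V E c"
proof -
  obtain T where "T \<subseteq> E" "is_tree V T"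
    using connected_imp_spanning_tree assms(1-3) unfolding simple_graph_def by metis
  then show ?thesis
    using inj_on_subset[OF assms(4)] unfolding rainbow_3_connecting_def by blast
qed

lemma rx3_attained:
  assumes "simple_graph V E" "graph_connected V E" "V \<noteq> {}"
  obtains c where "\<forall>e\<in>E. c e < rx3 V E" "rainbow_3_connecting V E c"
proof -
  have "finite E"
    using assms(1) unfolding simple_graph_def by (intro finite_subset[of E "Pow V"]) auto
  then obtain g :: "'a set \<Rightarrow> nat" and n where "g ` E = {i. i < n}" "inj_on g E"
    by (metis finite_imp_inj_to_nat_seg)
  then have "\<exists>k c. (\<forall>e\<in>E. c e < k) \<and> rainbow_3_connecting V E c"
    using rainbow_3_connecting_if_inj[OF assms] by blast
  from LeastI_ex[OF this] show thesis
    using that unfolding rx3_def by blast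
qed

lemma rx3_le:
  assumes "\<forall>e\<in>E. c e < k" "rainbow_3_connecting V E c"
  shows "rx3 V E \<le> k"
  unfolding rx3_def by (rule Least_le) (use assms in blast)

locale vertex_split =
  fixes V :: "'a set" and E :: "'a set set" and v v1 v2 :: 'a and f :: "'a \<Rightarrow> 'a"
  assumes simple: "simple_graph V E"
    and v_in_V: "v \<in> V"
    and v1_neq_v2: "v1 \<noteq> v2"
    and v1_fresh: "v1 \<notin> V - {v}"
    and v2_fresh: "v2 \<notin> V - {v}"
    and f_range: "f u \<in> {v1, v2}"
begin

definition split_vertices :: "'a set \<Rightarrow> 'a set" where
  "split_vertices W = (W - {v}) \<union> {v1, v2}"

definition split_edges :: "'a set set \<Rightarrow> 'a set set" where
  "split_edges F = {e \<in> F. v \<notin> e} \<union> {{f u, u} | u. {v, u} \<in> F} \<union> {{v1, v2}}"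

definition merge :: "'a \<Rightarrow> 'a" where
  "merge x = (if x = v1 \<or> x = v2 then v else x)"

definition split_colouring :: "('a set \<Rightarrow> nat) \<Rightarrow> nat \<Rightarrow> 'a set \<Rightarrow> nat" where
  "split_colouring c k e = (if e = {v1, v2} then k else c (merge ` e))"

lemma edge_wf: "e \<in> E \<Longrightarrow> e \<subseteq> V \<and> card e = 2"
  using simple unfolding simple_graph_def by blast

lemma neighbour_of_v: "{v, u} \<in> E \<Longrightarrow> u \<in> V - {v}"
  using edge_wf[of "{v, u}"] by (cases "u = v") auto

lemma merge_id: "x \<in> V - {v} \<Longrightarrow> merge x = x"
  using v1_fresh v2_fresh unfolding merge_def by auto

lemma split_edges_cases:
  assumes "F \<subseteq> E" "e \<in> split_edges F"
  obtains (old) "e \<in> F" "v \<notin> e" "merge ` e = e"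
    | (moved) u where "e = {f u, u}" "{v, u} \<in> F" "u \<in> V - {v}" "merge ` e = {v, u}"
    | (new) "e = {v1, v2}"
proof -
  consider "e \<in> F" "v \<notin> e" | u where "e = {f u, u}" "{v, u} \<in> F" | "e = {v1, v2}"
    using assms(2) unfolding split_edges_def by blast
  then show thesis
  proof cases
    case 1
    then have "e \<subseteq> V - {v}" using assms(1) edge_wf by blast
    then have "merge ` e = e" using merge_id by force
    with 1 show thesis by (rule old)
  next
    case (2 u)
    then have u: "u \<in> V - {v}" using assms(1) neighbour_of_v by blast
    have "merge (f u) = v" using f_range unfolding merge_def by auto
    then have "merge ` e = {v, u}" using 2(1) merge_id[OF u] by simp
    with 2 u show thesis by (rule moved)
  qed (rule new)
qed

lemma split_edges_mono: "F \<subseteq> G \<Longrightarrow> split_edges F \<subseteq> split_edges G"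
  unfolding split_edges_def by blast

lemma split_edges_wf:
  assumes "F \<subseteq> E" "\<forall>e\<in>F. e \<subseteq> W"
  shows "\<forall>e\<in>split_edges F. e \<subseteq> split_vertices W \<and> card e = 2"
proof
  fix e assume "e \<in> split_edges F"
  with assms(1) show "e \<subseteq> split_vertices W \<and> card e = 2"
  proof (cases rule: split_edges_cases)
    case old
    then show ?thesis using assms edge_wf unfolding split_vertices_def by blast
  next
    case (moved u)
    then have "f u \<noteq> u" using f_range v1_fresh v2_fresh by auto
    then show ?thesis using moved assms(2) f_range unfolding split_vertices_def by auto
  next
    case new
    then show ?thesis using v1_neq_v2 unfolding split_vertices_def by auto
  qed
qed

lemma merge_image_mem:
  assumes "F \<subseteq> E" "e \<in> split_edges F" "e \<noteq> {v1, v2}"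
  shows "merge ` e \<in> F"
  using assms(1,2) by (cases rule: split_edges_cases) (use assms(3) in auto)

lemma inj_on_merge_image:
  assumes "F \<subseteq> E"
  shows "inj_on ((`) merge) (split_edges F - {{v1, v2}})"
proof (rule inj_onI)
  fix e1 e2
  assume e1: "e1 \<in> split_edges F - {{v1, v2}}" and e2: "e2 \<in> split_edges F - {{v1, v2}}"
    and eq: "merge ` e1 = merge ` e2"
  from assms DiffD1[OF e1] show "e1 = e2"
  proof (cases rule: split_edges_cases)
    case old
    note e1_old = old
    from assms DiffD1[OF e2] show ?thesis
    proof (cases rule: split_edges_cases)
      case (moved u2)
      then have "v \<in> merge ` e1" using eq by simp
      with e1_old(2,3) show ?thesis by argo
    next
      case old
      from e1_old(3) old(3) eq show ?thesis by argo
    qed (use e2 in simp)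
  next
    case (moved u1)
    note e1_moved = moved
    from assms DiffD1[OF e2] show ?thesis
    proof (cases rule: split_edges_cases)
      case old
      have "v \<in> merge ` e2" using eq e1_moved(4) by (metis insertI1)
      with old(2,3) show ?thesis by argo
    next
      case (moved u2)
      have "{v, u1} = {v, u2}" using e1_moved(4) moved(4) eq by argo
      then have "u1 = u2" using e1_moved(3) moved(3) by (auto simp: doubleton_eq_iff)
      with e1_moved moved show ?thesis by simp
    qed (use e2 in simp)
  qed (use e1 in simp)
qed

lemma split_colouring_less:
  assumes "\<forall>e\<in>E. c e < k"
  shows "\<forall>e\<in>split_edges E. split_colouring c k e < k + 1"
  using assms merge_image_mem[of E] unfolding split_colouring_def by fastforce

lemma inj_on_split_colouring:
  assumes "F \<subseteq> E" "inj_on c F" "\<forall>e\<in>F. c e < k"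
  shows "inj_on (split_colouring c k) (split_edges F)"
proof (rule inj_onI)
  fix e1 e2
  assume e1: "e1 \<in> split_edges F" and e2: "e2 \<in> split_edges F"
    and eq: "split_colouring c k e1 = split_colouring c k e2"
  have colour: "split_colouring c k e = c (merge ` e) \<and> merge ` e \<in> F"
    if "e \<in> split_edges F" "e \<noteq> {v1, v2}" for e
    using merge_image_mem[OF assms(1) that] that(2) unfolding split_colouring_def by simp
  show "e1 = e2"
  proof (cases "e1 = {v1, v2} \<or> e2 = {v1, v2}")
    case True
    then show ?thesis
      using eq colour[OF e1] colour[OF e2] assms(3) unfolding split_colouring_def
      by (metis less_irrefl)
  next
    case False
    then have "merge ` e1 = merge ` e2"
      using eq colour[OF e1] colour[OF e2] inj_onD[OF assms(2)] by auto
    then show ?thesis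
      using inj_onD[OF inj_on_merge_image[OF assms(1)]] e1 e2 False by blast
  qed
qed

lemma connected_split:
  assumes "F \<subseteq> E" "graph_connected W F" "v \<in> W"
  shows "graph_connected (split_vertices W) (split_edges F)"
proof -
  let ?R = "(adj (split_edges F))\<^sup>*\<^sup>*"
  define rep where "rep y = (if y = v then v1 else y)" for y
  have v1_v2: "?R v1 v2" "?R v2 v1"
    unfolding split_edges_def adj_def by (auto simp: insert_commute)
  have from_v1: "?R v1 x" and to_v1: "?R x v1" if "x \<in> {v1, v2}" for x
    using that v1_v2 by auto
  have edge_at_v: "?R (rep v) (rep z)" if "adj F v z" for z
  proof -
    have "{f z, z} \<in> split_edges F" using that unfolding adj_def split_edges_def by blast
    then have "adj (split_edges F) (f z) z" unfolding adj_def .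
    with from_v1[OF f_range] have "?R v1 z" by (rule rtranclp.rtrancl_into_rtrancl)
    moreover have "z \<noteq> v" using that assms(1) neighbour_of_v unfolding adj_def by blast
    ultimately show ?thesis unfolding rep_def by simp
  qed
  have edge: "?R (rep y) (rep z)" if "adj F y z" for y z
  proof (cases "y = v \<or> z = v")
    case True
    then show ?thesis
    proof
      assume "y = v"
      with that show ?thesis using edge_at_v by simp
    next
      assume "z = v"
      with adj_sym[OF that] have "?R (rep v) (rep y)" using edge_at_v by simp
      with \<open>z = v\<close> show ?thesis by (simp add: adj_rtranclp_sym)
    qed
  next
    case False
    then have "adj (split_edges F) y z" using that unfolding adj_def split_edges_def by blast
    with False show ?thesis unfolding rep_def by simp
  qed
  have path: "?R (rep y) (rep z)" if "(adj F)\<^sup>*\<^sup>* y z" for y z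
    using that by (induction rule: rtranclp_induct) (simp, meson edge rtranclp_trans)
  have merge_in: "merge x \<in> W" and to_rep: "?R x (rep (merge x))"
    if "x \<in> split_vertices W" for x
    using that assms(3) to_v1[of x] unfolding split_vertices_def merge_def rep_def by auto
  show ?thesis
    unfolding graph_connected_def
  proof (intro ballI)
    fix a b assume "a \<in> split_vertices W" "b \<in> split_vertices W"
    moreover from this have "(adj F)\<^sup>*\<^sup>* (merge a) (merge b)"
      using assms(2) merge_in unfolding graph_connected_def by blast
    ultimately show "?R a b"
      using to_rep[of a] adj_rtranclp_sym[OF to_rep[of b]] path rtranclp_trans by metis
  qed
qed

lemma rainbow_3_connecting_split:
  assumes "3 \<le> card V" "\<forall>e\<in>E. c e < k" "rainbow_3_connecting V E c"
  shows "rainbow_3_connecting (split_vertices V) (split_edges E) (split_colouring c k)"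
  unfolding rainbow_3_connecting_def
proof (intro allI impI)
  fix S assume S: "S \<subseteq> split_vertices V \<and> card S = 3"
  have "finite V" using simple unfolding simple_graph_def by blast
  have "finite S" using S by (intro card_ge_0_finite) simp
  then have card_S: "card (merge ` S) \<le> 3" using card_image_le[of S merge] S by simp
  have merge_S_V: "merge ` S \<subseteq> V" using S v_in_V unfolding split_vertices_def merge_def by auto
  obtain T where T: "merge ` S \<subseteq> T" "T \<subseteq> V" "card T = 3"
    using exists_subset_between[OF card_S assms(1) merge_S_V \<open>finite V\<close>] by blast
  obtain W F where WF: "W \<subseteq> V" "F \<subseteq> E" "is_tree W F" "T \<subseteq> W" "inj_on c F"
    using assms(3)[unfolded rainbow_3_connecting_def, rule_format, OF conjI[OF T(2,3)]] by blast
  have merge_S: "merge ` S \<subseteq> W" using T(1) WF(4) by blast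
  have F_wf: "\<forall>e\<in>F. e \<subseteq> W \<and> card e = 2" and "graph_connected W F"
    using WF(3) unfolding is_tree_def by simp_all
  have S_merge: "x \<in> {v1, v2} \<or> (x \<in> V - {v} \<and> merge x = x)" if "x \<in> S" for x
    using that S merge_id unfolding split_vertices_def by blast
  show "\<exists>W F. W \<subseteq> split_vertices V \<and> F \<subseteq> split_edges E \<and> is_tree W F \<and> S \<subseteq> W
      \<and> inj_on (split_colouring c k) F"
  proof (cases "v \<in> W")
    case False
    have "S \<subseteq> W"
    proof
      fix x assume "x \<in> S"
      then have "merge x \<in> W" using merge_S by blast
      then have "x \<notin> {v1, v2}" using False unfolding merge_def by auto
      then show "x \<in> W" using S_merge[OF \<open>x \<in> S\<close>] \<open>merge x \<in> W\<close> by simp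
    qed
    have "W \<subseteq> split_vertices V" using WF(1) False unfolding split_vertices_def by blast
    have "F \<subseteq> {e \<in> E. v \<notin> e}" using WF(2) F_wf False by blast
    then have "F \<subseteq> split_edges E" unfolding split_edges_def by blast
    have colour_eq: "split_colouring c k e = c e" if "e \<in> F" for e
    proof -
      have "e \<subseteq> V - {v}" using that F_wf WF(1) False by blast
      then have "merge ` e = e" using merge_id by force
      moreover have "e \<noteq> {v1, v2}" using \<open>e \<subseteq> V - {v}\<close> v1_fresh by blast
      ultimately show ?thesis unfolding split_colouring_def by simp
    qed
    then have "inj_on (split_colouring c k) F"
      using WF(5) inj_on_cong[of F "split_colouring c k" c] by simp
    show ?thesis
      by (intro exI[of _ W] exI[of _ F] conjI; fact)
  next
    case True
    have "finite (split_vertices W)"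
      using WF(1) \<open>finite V\<close> finite_subset unfolding split_vertices_def by blast
    moreover have "split_vertices W \<noteq> {}" unfolding split_vertices_def by blast
    moreover have "\<forall>e\<in>split_edges F. e \<subseteq> split_vertices W \<and> card e = 2"
      using split_edges_wf[OF WF(2)] F_wf by blast
    moreover have "graph_connected (split_vertices W) (split_edges F)"
      using connected_split[OF WF(2) \<open>graph_connected W F\<close> True] .
    ultimately obtain T' where T': "T' \<subseteq> split_edges F" "is_tree (split_vertices W) T'"
      by (rule connected_imp_spanning_tree)
    have "S \<subseteq> split_vertices W"
    proof
      fix x assume "x \<in> S"
      then have "merge x \<in> W" using merge_S by blast
      then show "x \<in> split_vertices W"
        using S_merge[OF \<open>x \<in> S\<close>] unfolding split_vertices_def by auto
    qed
    have "split_vertices W \<subseteq> split_vertices V" using WF(1) unfolding split_vertices_def by blast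
    have "T' \<subseteq> split_edges E" using T'(1) split_edges_mono[OF WF(2)] by blast
    have "\<forall>e\<in>F. c e < k" using assms(2) WF(2) by blast
    then have "inj_on (split_colouring c k) T'"
      using inj_on_split_colouring[OF WF(2,5)] T'(1) inj_on_subset by blast
    show ?thesis
      by (intro exI[of _ "split_vertices W"] exI[of _ T'] conjI; fact)
  qed
qed

end

theorem theorem9:
  fixes V V' :: "'a set" and E E' :: "'a set set" and v :: 'a
  assumes "simple_graph V E"
    and "graph_connected V E"
    and "card V \<ge> 3"
    and "is_split V E v V' E'"
  shows "rx3 V' E' \<le> rx3 V E + 1"
proof -
  obtain v1 v2 f where split: "v1 \<noteq> v2" "v1 \<notin> V - {v}" "v2 \<notin> V - {v}"
      "\<forall>u. f u = v1 \<or> f u = v2" "V' = (V - {v}) \<union> {v1, v2}"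
      "E' = {e \<in> E. v \<notin> e} \<union> {{f u, u} | u. {v, u} \<in> E} \<union> {{v1, v2}}"
    and "v \<in> V"
    using assms(4) unfolding is_split_def by blast
  interpret vertex_split V E v v1 v2 f
    using assms(1) split(1-4) \<open>v \<in> V\<close> by unfold_locales auto
  have V': "V' = split_vertices V" and E': "E' = split_edges E"
    using split(5,6) unfolding split_vertices_def split_edges_def by simp_all
  have "V \<noteq> {}" using assms(3) by auto
  with assms(1,2) obtain c where c: "\<forall>e\<in>E. c e < rx3 V E" "rainbow_3_connecting V E c"
    by (rule rx3_attained)
  show ?thesis
    unfolding V' E'
    using rx3_le[OF split_colouring_less[OF c(1)] rainbow_3_connecting_split[OF assms(3) c]] .
qed

end
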